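(* Let $p_0<0$, $\alpha\in(0,1)$, $\mathbb{S}:=\mathbb{R}/(2\pi\mathbb{Z})$, $\Omega:=\mathbb{S}\times(p_0,0)$. Let $C_1>1$ be a constant, independent of $L$, with the following property: for every integer $N\ge3$, every $L\ge1$ and all functions $u_1,u_2,u_3$ on $\overline\Omega$ with $\partial_q^nu_i\in C^\alpha(\overline\Omega)$ for $0\le n\le N$ and $\|\partial_q^n u_i\|_\alpha\le L^{n-1}(n-2)!$ for $2\le n\le N$, one has $\|\partial_q^n(u_1u_2u_3)\|_\alpha\le C_1\big(1+\sum_{i=1}^3\sum_{l=0}^1\|\partial_q^l u_i\|_\alpha\big)^6L^{n-1}(n-2)!$ for all $2\le n\le N$. Let $N\ge3$ and let $u$ be a function on $\overline\Omega$ with $\partial_q^n u\in C^\alpha(\overline\Omega)$ for all $0\le n\le N$ and $\inf_\Omega u>0$. If there exists a constant \[ L\ge \|\partial_q^2(1/u)\|_\alpha^2+C_1^2\Big(1+\sum_{l=0}^1\big(2\|\partial_q^l(1/u)\|_\alpha+\|\partial_q^{1+l}u\|_\alpha\big)\Big)^{12} \] such that $\|\partial_q^n u\|_\alpha\le L^{n-2}(n-3)!$ for all $3\le n\le N$, then \[ \|\partial_q^n(1/u)\|_\alpha\le L^{n-3/2}(n-2)!\qquad\text{for all } 2\le n\le N. \]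
   Context: $\|\cdot\|_\alpha$ denotes the norm of the Hölder space $C^\alpha(\overline\Omega)$, normalized so that $\|uv\|_\alpha\le\|u\|_\alpha\|v\|_\alpha$. $\partial_q$ denotes differentiation with respect to the first variable $q\in\mathbb{S}$. (Such a constant $C_1$ exists; in the paper it is the constant of the preceding product-estimate lemma.) *)

theory Defs
  imports "HOL-Analysis.Analysis"
begin

text \<open>Functions on the closure of Omega = S x (p0,0), S = R/(2 pi Z), are represented as
  functions on R x R, 2pi-periodic in the first variable q, considered on the strip
  R x [p0,0].\<close>

definition OmegaBar :: "real \<Rightarrow> (real \<times> real) set" where
  "OmegaBar p0 = {z. p0 \<le> snd z \<and> snd z \<le> 0}"

definition Omega :: "real \<Rightarrow> (real \<times> real) set" where
  "Omega p0 = {z. p0 < snd z \<and> snd z < 0}"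

definition periodic_q :: "(real \<times> real \<Rightarrow> real) \<Rightarrow> bool" where
  "periodic_q u \<longleftrightarrow> (\<forall>q p. u (q + 2 * pi, p) = u (q, p))"

definition dq :: "(real \<times> real \<Rightarrow> real) \<Rightarrow> real \<times> real \<Rightarrow> real" where
  "dq u = (\<lambda>z. deriv (\<lambda>t. u (t, snd z)) (fst z))"

definition dqn :: "nat \<Rightarrow> (real \<times> real \<Rightarrow> real) \<Rightarrow> real \<times> real \<Rightarrow> real" where
  "dqn n u = (dq ^^ n) u"

definition holder_quotients :: "real \<Rightarrow> real \<Rightarrow> (real \<times> real \<Rightarrow> real) \<Rightarrow> real set" where
  "holder_quotients \<alpha> p0 v =
     {\<bar>v x - v y\<bar> / (dist x y) powr \<alpha> | x y. x \<in> OmegaBar p0 \<and> y \<in> OmegaBar p0 \<and> x \<noteq> y}"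

definition in_Holder :: "real \<Rightarrow> real \<Rightarrow> (real \<times> real \<Rightarrow> real) \<Rightarrow> bool" where
  "in_Holder \<alpha> p0 v \<longleftrightarrow> bdd_above ((\<lambda>z. \<bar>v z\<bar>) ` OmegaBar p0) \<and> bdd_above (holder_quotients \<alpha> p0 v)"

text \<open>Hoelder norm: sup norm plus Hoelder seminorm (this is submultiplicative)\<close>
definition holder_norm :: "real \<Rightarrow> real \<Rightarrow> (real \<times> real \<Rightarrow> real) \<Rightarrow> real" where
  "holder_norm \<alpha> p0 v = (SUP z\<in>OmegaBar p0. \<bar>v z\<bar>) + Sup (holder_quotients \<alpha> p0 v)"

definition Cq :: "nat \<Rightarrow> real \<Rightarrow> real \<Rightarrow> (real \<times> real \<Rightarrow> real) \<Rightarrow> bool" where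
  "Cq N \<alpha> p0 u \<longleftrightarrow> periodic_q u \<and>
     (\<forall>n<N. \<forall>z\<in>OmegaBar p0. (\<lambda>t. dqn n u (t, snd z)) differentiable (at (fst z))) \<and>
     (\<forall>n\<le>N. in_Holder \<alpha> p0 (dqn n u))"

end

theory Submission
  imports Defs
begin

text \<open>Write \<open>v = 1/u\<close> and \<open>a = -\<partial>\<^sub>q u\<close>, so that \<open>\<partial>\<^sub>q v = a v v\<close>. The bound on \<open>\<partial>\<^sub>q\<^sup>2 v\<close>
  is built into the choice of \<open>L\<close>; the bound on \<open>\<partial>\<^sub>q\<^sup>3 v = \<partial>\<^sub>q\<^sup>2(a v v)\<close> follows from the
  Leibniz rule and the submultiplicativity of the Hoelder norm. For \<open>n \<ge> 4\<close> the
  triple-product estimate, applied to \<open>\<partial>\<^sub>q\<^sup>n\<^sup>-\<^sup>1(a v v)\<close> with the induction hypothesis for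
  the lower derivatives of \<open>v\<close>, produces the factor \<open>C\<^sub>1(1 + \<dots>)\<^sup>6\<close>, which the choice of
  \<open>L\<close> bounds by \<open>\<surd>L\<close>; together with \<open>(n-3)! \<le> (n-2)!\<close> this turns \<open>L\<^sup>n\<^sup>-\<^sup>2\<close> into
  \<open>L\<^sup>n\<^sup>-\<^sup>3\<^sup>/\<^sup>2\<close>.\<close>

section \<open>Hoelder functions on the closed strip\<close>

lemma OmegaBar_eq: "OmegaBar p0 = UNIV \<times> {p0..0}"
  by (auto simp: OmegaBar_def)

lemma closure_Omega: "p0 < 0 \<Longrightarrow> closure (Omega p0) = OmegaBar p0"
proof -
  assume "p0 < 0"
  moreover have "Omega p0 = UNIV \<times> {p0<..<0}" by (auto simp: Omega_def)
  ultimately show ?thesis by (simp add: closure_Times OmegaBar_eq)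
qed

lemma OmegaBar_line: "z \<in> OmegaBar p0 \<Longrightarrow> (t, snd z) \<in> OmegaBar p0"
  by (simp add: OmegaBar_def)

lemma OmegaBar_nonempty: "p0 < 0 \<Longrightarrow> OmegaBar p0 \<noteq> {}"
  by (auto simp: OmegaBar_def)

lemma holder_quotient_mem:
  "x \<in> OmegaBar p0 \<Longrightarrow> y \<in> OmegaBar p0 \<Longrightarrow> x \<noteq> y \<Longrightarrow>
   \<bar>v x - v y\<bar> / dist x y powr \<alpha> \<in> holder_quotients \<alpha> p0 v"
  unfolding holder_quotients_def by blast

lemma holder_quotients_nonempty: "p0 < 0 \<Longrightarrow> holder_quotients \<alpha> p0 v \<noteq> {}"
  using holder_quotient_mem[of "(0,0)" p0 "(1,0)" v \<alpha>] by (auto simp: OmegaBar_def)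

lemma holder_quotient_nonneg: "q \<in> holder_quotients \<alpha> p0 v \<Longrightarrow> 0 \<le> q"
  unfolding holder_quotients_def by auto

lemma holder_sup_upper:
  "in_Holder \<alpha> p0 f \<Longrightarrow> x \<in> OmegaBar p0 \<Longrightarrow> \<bar>f x\<bar> \<le> (SUP z\<in>OmegaBar p0. \<bar>f z\<bar>)"
  by (intro cSUP_upper) (auto simp: in_Holder_def)

lemma holder_seminorm_nonneg:
  assumes "in_Holder \<alpha> p0 f" "p0 < 0"
  shows "0 \<le> Sup (holder_quotients \<alpha> p0 f)"
proof -
  obtain q where q: "q \<in> holder_quotients \<alpha> p0 f"
    using holder_quotients_nonempty[OF assms(2)] by blast
  show ?thesis
    using assms(1) by (intro cSup_upper2[OF q holder_quotient_nonneg[OF q]]) (simp add: in_Holder_def)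
qed

lemma holder_estimate:
  assumes f: "in_Holder \<alpha> p0 f" "p0 < 0" and "x \<in> OmegaBar p0" "y \<in> OmegaBar p0"
  shows "\<bar>f x - f y\<bar> \<le> Sup (holder_quotients \<alpha> p0 f) * dist x y powr \<alpha>"
proof (cases "x = y")
  case True
  then show ?thesis using holder_seminorm_nonneg[OF f] by simp
next
  case False
  have "\<bar>f x - f y\<bar> / dist x y powr \<alpha> \<le> Sup (holder_quotients \<alpha> p0 f)"
    using f(1) by (intro cSup_upper holder_quotient_mem assms False) (simp add: in_Holder_def)
  then show ?thesis using False by (simp add: divide_le_eq)
qed

lemma holder_norm_le_intro:
  assumes "p0 < 0" and sup: "\<And>x. x \<in> OmegaBar p0 \<Longrightarrow> \<bar>g x\<bar> \<le> A"
    and est: "\<And>x y. x \<in> OmegaBar p0 \<Longrightarrow> y \<in> OmegaBar p0 \<Longrightarrow> x \<noteq> y \<Longrightarrow>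
               \<bar>g x - g y\<bar> \<le> B * dist x y powr \<alpha>"
  shows "in_Holder \<alpha> p0 g" "holder_norm \<alpha> p0 g \<le> A + B"
proof -
  have quot: "q \<le> B" if q_mem: "q \<in> holder_quotients \<alpha> p0 g" for q
  proof -
    obtain x y where xy: "x \<in> OmegaBar p0" "y \<in> OmegaBar p0" "x \<noteq> y"
      and q: "q = \<bar>g x - g y\<bar> / dist x y powr \<alpha>"
      using q_mem unfolding holder_quotients_def by blast
    show "q \<le> B" using est[OF xy] xy(3) q by (simp add: divide_le_eq)
  qed
  show "in_Holder \<alpha> p0 g" unfolding in_Holder_def bdd_above_def using sup quot by blast
  have "(SUP z\<in>OmegaBar p0. \<bar>g z\<bar>) \<le> A"
    using sup OmegaBar_nonempty[OF assms(1)] by (intro cSUP_least) auto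
  moreover have "Sup (holder_quotients \<alpha> p0 g) \<le> B"
    using quot holder_quotients_nonempty[OF assms(1)] by (intro cSup_least) auto
  ultimately show "holder_norm \<alpha> p0 g \<le> A + B" unfolding holder_norm_def by simp
qed

lemma holder_norm_nonneg: "in_Holder \<alpha> p0 f \<Longrightarrow> p0 < 0 \<Longrightarrow> 0 \<le> holder_norm \<alpha> p0 f"
  using OmegaBar_nonempty holder_sup_upper holder_seminorm_nonneg
  unfolding holder_norm_def by (metis abs_ge_zero add_nonneg_nonneg all_not_in_conv order_trans)

lemma holder_norm_uminus: "holder_norm \<alpha> p0 (\<lambda>z. - f z) = holder_norm \<alpha> p0 f"
  and in_Holder_uminus: "in_Holder \<alpha> p0 (\<lambda>z. - f z) = in_Holder \<alpha> p0 f"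
proof -
  have "holder_quotients \<alpha> p0 (\<lambda>z. - f z) = holder_quotients \<alpha> p0 f"
    unfolding holder_quotients_def by (simp add: abs_minus_commute)
  then show "holder_norm \<alpha> p0 (\<lambda>z. - f z) = holder_norm \<alpha> p0 f"
    "in_Holder \<alpha> p0 (\<lambda>z. - f z) = in_Holder \<alpha> p0 f"
    unfolding holder_norm_def in_Holder_def by simp_all
qed

lemma holder_norm_cong: "(\<And>z. z \<in> OmegaBar p0 \<Longrightarrow> f z = g z) \<Longrightarrow> holder_norm \<alpha> p0 f = holder_norm \<alpha> p0 g"
  and in_Holder_cong: "(\<And>z. z \<in> OmegaBar p0 \<Longrightarrow> f z = g z) \<Longrightarrow> in_Holder \<alpha> p0 f = in_Holder \<alpha> p0 g"
proof -
  assume e: "\<And>z. z \<in> OmegaBar p0 \<Longrightarrow> f z = g z"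
  have "holder_quotients \<alpha> p0 f = holder_quotients \<alpha> p0 g"
    unfolding holder_quotients_def by (auto simp: e) (metis e)+
  moreover have "(\<lambda>z. \<bar>f z\<bar>) ` OmegaBar p0 = (\<lambda>z. \<bar>g z\<bar>) ` OmegaBar p0" by (simp add: e)
  ultimately show "holder_norm \<alpha> p0 f = holder_norm \<alpha> p0 g" "in_Holder \<alpha> p0 f = in_Holder \<alpha> p0 g"
    unfolding holder_norm_def in_Holder_def by (simp_all add: e)
qed

lemma holder_norm_add_le:
  assumes f: "in_Holder \<alpha> p0 f" and g: "in_Holder \<alpha> p0 g" and p: "p0 < 0"
  shows "in_Holder \<alpha> p0 (\<lambda>z. f z + g z)"
    "holder_norm \<alpha> p0 (\<lambda>z. f z + g z) \<le> holder_norm \<alpha> p0 f + holder_norm \<alpha> p0 g"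
proof -
  let ?Sf = "(SUP z\<in>OmegaBar p0. \<bar>f z\<bar>)" and ?Sg = "(SUP z\<in>OmegaBar p0. \<bar>g z\<bar>)"
  let ?Hf = "Sup (holder_quotients \<alpha> p0 f)" and ?Hg = "Sup (holder_quotients \<alpha> p0 g)"
  have sup: "\<bar>f x + g x\<bar> \<le> ?Sf + ?Sg" if "x \<in> OmegaBar p0" for x
    using holder_sup_upper[OF f that] holder_sup_upper[OF g that] by linarith
  have est: "\<bar>(f x + g x) - (f y + g y)\<bar> \<le> (?Hf + ?Hg) * dist x y powr \<alpha>"
    if "x \<in> OmegaBar p0" "y \<in> OmegaBar p0" for x y
    using holder_estimate[OF f p that] holder_estimate[OF g p that] by (simp add: algebra_simps)
  show "in_Holder \<alpha> p0 (\<lambda>z. f z + g z)" using holder_norm_le_intro(1)[OF p sup est] .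
  show "holder_norm \<alpha> p0 (\<lambda>z. f z + g z) \<le> holder_norm \<alpha> p0 f + holder_norm \<alpha> p0 g"
    using holder_norm_le_intro(2)[OF p sup est] unfolding holder_norm_def by simp
qed

lemma holder_norm_mult_le:
  assumes f: "in_Holder \<alpha> p0 f" and g: "in_Holder \<alpha> p0 g" and p: "p0 < 0"
  shows "in_Holder \<alpha> p0 (\<lambda>z. f z * g z)"
    "holder_norm \<alpha> p0 (\<lambda>z. f z * g z) \<le> holder_norm \<alpha> p0 f * holder_norm \<alpha> p0 g"
proof -
  let ?Sf = "(SUP z\<in>OmegaBar p0. \<bar>f z\<bar>)" and ?Sg = "(SUP z\<in>OmegaBar p0. \<bar>g z\<bar>)"
  let ?Hf = "Sup (holder_quotients \<alpha> p0 f)" and ?Hg = "Sup (holder_quotients \<alpha> p0 g)"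
  have sup: "\<bar>f x * g x\<bar> \<le> ?Sf * ?Sg" if "x \<in> OmegaBar p0" for x
    using holder_sup_upper[OF f that] holder_sup_upper[OF g that]
    by (simp add: abs_mult mult_mono')
  have est: "\<bar>f x * g x - f y * g y\<bar> \<le> (?Sf * ?Hg + ?Sg * ?Hf) * dist x y powr \<alpha>"
    if "x \<in> OmegaBar p0" "y \<in> OmegaBar p0" for x y
  proof -
    have "\<bar>f x * (g x - g y)\<bar> \<le> ?Sf * (?Hg * dist x y powr \<alpha>)"
      unfolding abs_mult using holder_sup_upper[OF f that(1)] holder_estimate[OF g p that]
      by (intro mult_mono) auto
    moreover have "\<bar>g y * (f x - f y)\<bar> \<le> ?Sg * (?Hf * dist x y powr \<alpha>)"
      unfolding abs_mult using holder_sup_upper[OF g that(2)] holder_estimate[OF f p that]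
      by (intro mult_mono) auto
    moreover have "f x * g x - f y * g y = f x * (g x - g y) + g y * (f x - f y)"
      by (simp add: algebra_simps)
    ultimately show ?thesis
      using abs_triangle_ineq[of "f x * (g x - g y)" "g y * (f x - f y)"] by (simp add: algebra_simps)
  qed
  show "in_Holder \<alpha> p0 (\<lambda>z. f z * g z)" using holder_norm_le_intro(1)[OF p sup est] .
  have "holder_norm \<alpha> p0 (\<lambda>z. f z * g z) \<le> ?Sf * ?Sg + (?Sf * ?Hg + ?Sg * ?Hf)"
    using holder_norm_le_intro(2)[OF p sup est] .
  also have "\<dots> \<le> (?Sf + ?Hf) * (?Sg + ?Hg)"
    using holder_seminorm_nonneg[OF f p] holder_seminorm_nonneg[OF g p] by (simp add: algebra_simps)
  finally show "holder_norm \<alpha> p0 (\<lambda>z. f z * g z) \<le> holder_norm \<alpha> p0 f * holder_norm \<alpha> p0 g"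
    unfolding holder_norm_def .
qed

lemma in_Holder_inverse:
  assumes f: "in_Holder \<alpha> p0 f" and p: "p0 < 0" and c: "c > 0"
    and lb: "\<And>z. z \<in> OmegaBar p0 \<Longrightarrow> c \<le> f z"
  shows "in_Holder \<alpha> p0 (\<lambda>z. 1 / f z)"
proof -
  let ?Hf = "Sup (holder_quotients \<alpha> p0 f)"
  have sup: "\<bar>1 / f x\<bar> \<le> 1 / c" if "x \<in> OmegaBar p0" for x
    using lb[OF that] c by (simp add: frac_le)
  have est: "\<bar>1 / f x - 1 / f y\<bar> \<le> (?Hf / c\<^sup>2) * dist x y powr \<alpha>"
    if "x \<in> OmegaBar p0" "y \<in> OmegaBar p0" for x y
  proof -
    have fxy: "c \<le> f x" "c \<le> f y" using lb that by auto
    have "\<bar>1 / f x - 1 / f y\<bar> = \<bar>f x - f y\<bar> / (f x * f y)"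
      using fxy c by (simp add: field_simps abs_minus_commute abs_mult)
    also have "\<dots> \<le> \<bar>f x - f y\<bar> / c\<^sup>2"
      using fxy c by (intro divide_left_mono) (auto simp: power2_eq_square intro: mult_mono)
    also have "\<dots> \<le> (?Hf * dist x y powr \<alpha>) / c\<^sup>2"
      using holder_estimate[OF f p that] by (intro divide_right_mono) auto
    finally show ?thesis by simp
  qed
  show ?thesis using holder_norm_le_intro(1)[OF p sup est] .
qed

lemma in_Holder_continuous_on:
  assumes f: "in_Holder \<alpha> p0 f" and p: "p0 < 0" and "0 < \<alpha>"
  shows "continuous_on (OmegaBar p0) f"
  unfolding continuous_on_def
proof
  fix x assume x: "x \<in> OmegaBar p0"
  let ?F = "at x within OmegaBar p0"
  have "((\<lambda>y. dist y x powr \<alpha>) \<longlongrightarrow> 0) ?F"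
    using tendsto_dist[OF tendsto_ident_at tendsto_const, of x x] \<open>0 < \<alpha>\<close>
    by (intro tendsto_zero_powrI) auto
  then have "((\<lambda>y. Sup (holder_quotients \<alpha> p0 f) * dist y x powr \<alpha>) \<longlongrightarrow> 0) ?F"
    by (rule tendsto_mult_right_zero)
  moreover have "\<forall>\<^sub>F y in ?F. norm (f y - f x) \<le> Sup (holder_quotients \<alpha> p0 f) * dist y x powr \<alpha>"
    using holder_estimate[OF f p _ x] by (auto simp: eventually_at_filter)
  ultimately have "((\<lambda>y. f y - f x) \<longlongrightarrow> 0) ?F"
    by (rule Lim_null_comparison[rotated])
  then show "(f \<longlongrightarrow> f x) ?F" by (simp add: LIM_zero_iff)
qed

lemma Inf_Omega_le:
  assumes f: "in_Holder \<alpha> p0 f" and p: "p0 < 0" and "0 < \<alpha>" and z: "z \<in> OmegaBar p0"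
  shows "Inf (f ` Omega p0) \<le> f z"
proof (rule continuous_ge_on_closure[where S = "Omega p0" and f = f])
  show "continuous_on (closure (Omega p0)) f"
    using in_Holder_continuous_on[OF assms(1-3)] by (simp add: closure_Omega[OF p])
  show "z \<in> closure (Omega p0)" using z by (simp add: closure_Omega[OF p])
  have "Omega p0 \<subseteq> OmegaBar p0" by (auto simp: Omega_def OmegaBar_def)
  then have "bdd_below (f ` Omega p0)"
    using f unfolding in_Holder_def bdd_above_def bdd_below_def
    by (metis (no_types, lifting) abs_le_D2 image_iff minus_le_iff subsetD)
  then show "Inf (f ` Omega p0) \<le> f w" if "w \<in> Omega p0" for w
    using that by (auto intro: cInf_lower)
qed

section \<open>Differentiation in \<open>q\<close>\<close>

definition q_holder :: "real \<Rightarrow> real \<Rightarrow> nat \<Rightarrow> (real \<times> real \<Rightarrow> real) \<Rightarrow> bool" where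
  "q_holder \<alpha> p0 k f \<longleftrightarrow>
     (\<forall>n<k. \<forall>z\<in>OmegaBar p0. (\<lambda>t. dqn n f (t, snd z)) differentiable (at (fst z))) \<and>
     (\<forall>n\<le>k. in_Holder \<alpha> p0 (dqn n f))"

lemma Cq_iff_q_holder: "Cq N \<alpha> p0 u \<longleftrightarrow> periodic_q u \<and> q_holder \<alpha> p0 N u"
  by (simp add: Cq_def q_holder_def)

lemma dqn_0 [simp]: "dqn 0 f = f"
  by (simp add: dqn_def)

lemma dqn_Suc: "dqn (Suc n) f = dq (dqn n f)"
  by (simp add: dqn_def)

lemma dqn_Suc_dq: "dqn (Suc n) f = dqn n (dq f)"
  by (simp only: dqn_def funpow_Suc_right comp_def)

lemma dqn_1 [simp]: "dqn 1 f = dq f" and dqn_Suc_0 [simp]: "dqn (Suc 0) f = dq f"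
  by (simp_all add: dqn_Suc)

lemma dqn_2: "dqn 2 f = dq (dq f)"
  by (simp add: numeral_2_eq_2 dqn_Suc)

lemma dq_cong:
  assumes "\<And>z. z \<in> OmegaBar p0 \<Longrightarrow> f z = g z" "z \<in> OmegaBar p0"
  shows "dq f z = dq g z"
proof -
  have "(\<lambda>t. f (t, snd z)) = (\<lambda>t. g (t, snd z))" using assms OmegaBar_line by auto
  then show ?thesis by (simp add: dq_def)
qed

lemma dqn_cong:
  "(\<And>z. z \<in> OmegaBar p0 \<Longrightarrow> f z = g z) \<Longrightarrow> z \<in> OmegaBar p0 \<Longrightarrow> dqn n f z = dqn n g z"
  by (induction n arbitrary: z) (auto simp: dqn_Suc intro!: dq_cong[of p0])

lemma q_holder_0: "q_holder \<alpha> p0 0 f \<longleftrightarrow> in_Holder \<alpha> p0 f"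
  by (simp add: q_holder_def)

lemma q_holder_Suc:
  "q_holder \<alpha> p0 (Suc k) f \<longleftrightarrow> in_Holder \<alpha> p0 f \<and>
     (\<forall>z\<in>OmegaBar p0. (\<lambda>t. f (t, snd z)) differentiable (at (fst z))) \<and> q_holder \<alpha> p0 k (dq f)"
proof -
  have le_Suc: "(\<forall>n\<le>m. P n) \<longleftrightarrow> (\<forall>n<Suc m. P n)" for m and P :: "nat \<Rightarrow> bool"
    by (auto simp: less_Suc_eq_le)
  show ?thesis unfolding q_holder_def le_Suc All_less_Suc2 dqn_Suc_dq dqn_0 by auto
qed

lemma q_holder_mono: "q_holder \<alpha> p0 m f \<Longrightarrow> k \<le> m \<Longrightarrow> q_holder \<alpha> p0 k f"
  unfolding q_holder_def by auto

lemma q_holder_in_Holder: "q_holder \<alpha> p0 k f \<Longrightarrow> n \<le> k \<Longrightarrow> in_Holder \<alpha> p0 (dqn n f)"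
  unfolding q_holder_def by auto

lemma q_holder_differentiable:
  "q_holder \<alpha> p0 k f \<Longrightarrow> n < k \<Longrightarrow> z \<in> OmegaBar p0 \<Longrightarrow>
   (\<lambda>t. dqn n f (t, snd z)) differentiable (at (fst z))"
  unfolding q_holder_def by auto

lemma q_holder_cong:
  "(\<And>z. z \<in> OmegaBar p0 \<Longrightarrow> f z = g z) \<Longrightarrow> q_holder \<alpha> p0 k f \<Longrightarrow> q_holder \<alpha> p0 k g"
proof (induction k arbitrary: f g)
  case 0
  then show ?case by (simp add: q_holder_0 in_Holder_cong[of p0 f g])
next
  case (Suc k)
  have "(\<lambda>t. f (t, snd z)) = (\<lambda>t. g (t, snd z))" if "z \<in> OmegaBar p0" for z
    using Suc.prems(1) OmegaBar_line[OF that] by auto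
  then show ?case
    using Suc.prems Suc.IH[of "dq f" "dq g"] in_Holder_cong[of p0 f g] dq_cong[of p0 f g]
    unfolding q_holder_Suc by auto
qed

lemma has_real_derivative_dq:
  "(\<lambda>t. f (t, snd z)) differentiable (at (fst z)) \<Longrightarrow>
   ((\<lambda>t. f (t, snd z)) has_real_derivative dq f z) (at (fst z))"
  unfolding dq_def by (simp add: DERIV_deriv_iff_real_differentiable)

lemma dq_eqI:
  "((\<lambda>t. f (t, snd z)) has_real_derivative D) (at (fst z)) \<Longrightarrow>
   dq f z = D \<and> (\<lambda>t. f (t, snd z)) differentiable (at (fst z))"
  unfolding dq_def by (auto simp: DERIV_imp_deriv real_differentiable_def)

lemma dq_add:
  assumes "(\<lambda>t. f (t, snd z)) differentiable (at (fst z))" "(\<lambda>t. g (t, snd z)) differentiable (at (fst z))"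
  shows "dq (\<lambda>z. f z + g z) z = dq f z + dq g z"
    "(\<lambda>t. f (t, snd z) + g (t, snd z)) differentiable (at (fst z))"
  using dq_eqI[OF DERIV_add[OF assms[THEN has_real_derivative_dq]]] by auto

lemma dq_mult:
  assumes "(\<lambda>t. f (t, snd z)) differentiable (at (fst z))" "(\<lambda>t. g (t, snd z)) differentiable (at (fst z))"
  shows "dq (\<lambda>z. f z * g z) z = dq f z * g z + f z * dq g z"
    "(\<lambda>t. f (t, snd z) * g (t, snd z)) differentiable (at (fst z))"
  using dq_eqI[OF DERIV_mult'[OF assms[THEN has_real_derivative_dq]]] by (auto simp: add.commute)

lemma dq_uminus:
  assumes "(\<lambda>t. f (t, snd z)) differentiable (at (fst z))"
  shows "dq (\<lambda>z. - f z) z = - dq f z" "(\<lambda>t. - f (t, snd z)) differentiable (at (fst z))"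
  using dq_eqI[OF DERIV_minus[OF assms[THEN has_real_derivative_dq]]] by auto

lemma dq_inverse:
  assumes "(\<lambda>t. f (t, snd z)) differentiable (at (fst z))" "f z \<noteq> 0"
  shows "dq (\<lambda>z. 1 / f z) z = - dq f z * (1 / f z) * (1 / f z)"
    "(\<lambda>t. 1 / f (t, snd z)) differentiable (at (fst z))"
proof -
  have "((\<lambda>t. 1 / f (t, snd z)) has_real_derivative - dq f z * (1 / f z) * (1 / f z)) (at (fst z))"
    using DERIV_inverse_fun[OF has_real_derivative_dq[OF assms(1)]] assms(2)
    by (simp add: inverse_eq_divide power2_eq_square)
  from dq_eqI[OF this] show "dq (\<lambda>z. 1 / f z) z = - dq f z * (1 / f z) * (1 / f z)"
    "(\<lambda>t. 1 / f (t, snd z)) differentiable (at (fst z))" by auto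
qed

lemma q_holder_add:
  "p0 < 0 \<Longrightarrow> q_holder \<alpha> p0 k f \<Longrightarrow> q_holder \<alpha> p0 k g \<Longrightarrow> q_holder \<alpha> p0 k (\<lambda>z. f z + g z)"
proof (induction k arbitrary: f g)
  case 0
  then show ?case by (simp add: q_holder_0 holder_norm_add_le)
next
  case (Suc k)
  have "q_holder \<alpha> p0 k (\<lambda>z. dq f z + dq g z)" using Suc by (simp add: q_holder_Suc)
  then have "q_holder \<alpha> p0 k (dq (\<lambda>z. f z + g z))"
    by (rule q_holder_cong[rotated]) (use Suc.prems in \<open>auto simp: q_holder_Suc dq_add\<close>)
  then show ?case using Suc.prems by (auto simp: q_holder_Suc holder_norm_add_le dq_add(2))
qed

lemma q_holder_uminus: "q_holder \<alpha> p0 k f \<Longrightarrow> q_holder \<alpha> p0 k (\<lambda>z. - f z)"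
proof (induction k arbitrary: f)
  case 0
  then show ?case by (simp add: q_holder_0 in_Holder_uminus)
next
  case (Suc k)
  have "q_holder \<alpha> p0 k (\<lambda>z. - dq f z)" using Suc by (simp add: q_holder_Suc)
  then have "q_holder \<alpha> p0 k (dq (\<lambda>z. - f z))"
    by (rule q_holder_cong[rotated]) (use Suc.prems in \<open>auto simp: q_holder_Suc dq_uminus\<close>)
  then show ?case using Suc.prems by (auto simp: q_holder_Suc in_Holder_uminus dq_uminus(2))
qed

lemma q_holder_mult:
  "p0 < 0 \<Longrightarrow> q_holder \<alpha> p0 k f \<Longrightarrow> q_holder \<alpha> p0 k g \<Longrightarrow> q_holder \<alpha> p0 k (\<lambda>z. f z * g z)"
proof (induction k arbitrary: f g)
  case 0
  then show ?case by (simp add: q_holder_0 holder_norm_mult_le)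
next
  case (Suc k)
  have "q_holder \<alpha> p0 k f" "q_holder \<alpha> p0 k g"
    using Suc.prems q_holder_mono[of \<alpha> p0 "Suc k" _ k] by auto
  then have "q_holder \<alpha> p0 k (\<lambda>z. dq f z * g z + f z * dq g z)"
    using Suc by (auto simp: q_holder_Suc intro!: q_holder_add)
  then have "q_holder \<alpha> p0 k (dq (\<lambda>z. f z * g z))"
    by (rule q_holder_cong[rotated]) (use Suc.prems in \<open>auto simp: q_holder_Suc dq_mult\<close>)
  then show ?case using Suc.prems by (auto simp: q_holder_Suc holder_norm_mult_le dq_mult(2))
qed

lemma q_holder_inverse:
  assumes p: "p0 < 0" and c: "c > 0" and lb: "\<And>z. z \<in> OmegaBar p0 \<Longrightarrow> c \<le> f z"
  shows "q_holder \<alpha> p0 k f \<Longrightarrow> q_holder \<alpha> p0 k (\<lambda>z. 1 / f z)"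
proof (induction k)
  case 0
  then show ?case using in_Holder_inverse[OF _ p c lb] by (simp add: q_holder_0)
next
  case (Suc k)
  have nz: "f z \<noteq> 0" if "z \<in> OmegaBar p0" for z using lb[OF that] c by auto
  have "q_holder \<alpha> p0 k (\<lambda>z. - dq f z)"
    using Suc.prems by (simp add: q_holder_Suc q_holder_uminus)
  then have "q_holder \<alpha> p0 k (\<lambda>z. - dq f z * (1 / f z) * (1 / f z))"
    using Suc.IH q_holder_mono[OF Suc.prems, of k] by (intro q_holder_mult[OF p]) auto
  then have "q_holder \<alpha> p0 k (dq (\<lambda>z. 1 / f z))"
    by (rule q_holder_cong[rotated]) (use Suc.prems nz in \<open>auto simp: q_holder_Suc dq_inverse\<close>)
  then show ?case
    using Suc.prems nz in_Holder_inverse[OF _ p c lb] by (auto simp: q_holder_Suc dq_inverse(2))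
qed

lemma periodic_q_dq: "periodic_q f \<Longrightarrow> periodic_q (dq f)"
proof -
  assume f: "periodic_q f"
  have "deriv g (x + c) = deriv g x" if "\<And>t. g (t + c) = g t" for g :: "real \<Rightarrow> real" and x c
  proof -
    have "(\<lambda>t. g (t + c)) = g" using that by auto
    then show ?thesis using DERIV_shift[of g _ x c] unfolding deriv_def by simp
  qed
  then show ?thesis using f unfolding periodic_q_def dq_def by auto
qed

lemma periodic_q_uminus: "periodic_q f \<Longrightarrow> periodic_q (\<lambda>z. - f z)"
  unfolding periodic_q_def by auto

lemma periodic_q_inverse: "periodic_q f \<Longrightarrow> periodic_q (\<lambda>z. 1 / f z)"
  unfolding periodic_q_def by auto

lemma dqn_uminus:
  "q_holder \<alpha> p0 k f \<Longrightarrow> m \<le> k \<Longrightarrow> z \<in> OmegaBar p0 \<Longrightarrow> dqn m (\<lambda>z. - f z) z = - dqn m f z"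
proof (induction m arbitrary: f k z)
  case 0
  then show ?case by simp
next
  case (Suc m)
  then obtain k' where k: "k = Suc k'" by (cases k) auto
  have hol: "q_holder \<alpha> p0 k' (dq f)"
    and diff: "\<forall>z\<in>OmegaBar p0. (\<lambda>t. f (t, snd z)) differentiable (at (fst z))"
    using Suc.prems(1) unfolding k q_holder_Suc by auto
  have "dqn m (dq (\<lambda>z. - f z)) z = dqn m (\<lambda>z. - dq f z) z"
    using Suc.prems(3) diff by (intro dqn_cong[of p0]) (auto simp: dq_uminus)
  also have "\<dots> = - dqn m (dq f) z" using Suc.IH[OF hol] Suc.prems(2,3) k by simp
  finally show ?case by (simp add: dqn_Suc_dq)
qed

section \<open>Leibniz estimates\<close>

lemma holder_norm_dq_mult_le:
  assumes p: "p0 < 0" and f: "q_holder \<alpha> p0 2 f" and g: "q_holder \<alpha> p0 2 g"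
  shows "holder_norm \<alpha> p0 (dq (\<lambda>z. f z * g z))
           \<le> holder_norm \<alpha> p0 (dq f) * holder_norm \<alpha> p0 g + holder_norm \<alpha> p0 f * holder_norm \<alpha> p0 (dq g)"
    and "holder_norm \<alpha> p0 (dqn 2 (\<lambda>z. f z * g z))
           \<le> holder_norm \<alpha> p0 (dqn 2 f) * holder_norm \<alpha> p0 g
             + 2 * (holder_norm \<alpha> p0 (dq f) * holder_norm \<alpha> p0 (dq g))
             + holder_norm \<alpha> p0 f * holder_norm \<alpha> p0 (dqn 2 g)"
proof -
  have hf: "in_Holder \<alpha> p0 f" "in_Holder \<alpha> p0 (dq f)" "in_Holder \<alpha> p0 (dq (dq f))"
    using q_holder_in_Holder[OF f, of 0] q_holder_in_Holder[OF f, of 1] q_holder_in_Holder[OF f, of 2]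
    by (auto simp: dqn_2)
  have hg: "in_Holder \<alpha> p0 g" "in_Holder \<alpha> p0 (dq g)" "in_Holder \<alpha> p0 (dq (dq g))"
    using q_holder_in_Holder[OF g, of 0] q_holder_in_Holder[OF g, of 1] q_holder_in_Holder[OF g, of 2]
    by (auto simp: dqn_2)
  have df: "(\<lambda>t. f (t, snd z)) differentiable (at (fst z))" "(\<lambda>t. dq f (t, snd z)) differentiable (at (fst z))"
    and dg: "(\<lambda>t. g (t, snd z)) differentiable (at (fst z))" "(\<lambda>t. dq g (t, snd z)) differentiable (at (fst z))"
    if "z \<in> OmegaBar p0" for z
    using q_holder_differentiable[OF f, of 0 z] q_holder_differentiable[OF f, of 1 z]
      q_holder_differentiable[OF g, of 0 z] q_holder_differentiable[OF g, of 1 z] that by auto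
  have d1: "dq (\<lambda>z. f z * g z) z = dq f z * g z + f z * dq g z" if "z \<in> OmegaBar p0" for z
    using dq_mult df dg that by blast
  have d2: "dq (dq (\<lambda>z. f z * g z)) z
      = (dq (dq f) z * g z + dq f z * dq g z) + (dq f z * dq g z + f z * dq (dq g) z)"
    if z: "z \<in> OmegaBar p0" for z
  proof -
    have "dq (dq (\<lambda>z. f z * g z)) z = dq (\<lambda>z. dq f z * g z + f z * dq g z) z"
      using z d1 by (intro dq_cong[of p0])
    also have "\<dots> = dq (\<lambda>z. dq f z * g z) z + dq (\<lambda>z. f z * dq g z) z"
      using dq_add dq_mult(2) df[OF z] dg[OF z] by simp
    also have "\<dots> = (dq (dq f) z * g z + dq f z * dq g z) + (dq f z * dq g z + f z * dq (dq g) z)"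
      using dq_mult(1) df[OF z] dg[OF z] by simp
    finally show ?thesis .
  qed
  have "holder_norm \<alpha> p0 (dq (\<lambda>z. f z * g z)) = holder_norm \<alpha> p0 (\<lambda>z. dq f z * g z + f z * dq g z)"
    using d1 by (rule holder_norm_cong)
  also have "\<dots> \<le> holder_norm \<alpha> p0 (\<lambda>z. dq f z * g z) + holder_norm \<alpha> p0 (\<lambda>z. f z * dq g z)"
    by (intro holder_norm_add_le holder_norm_mult_le hf hg p)
  also have "\<dots> \<le> holder_norm \<alpha> p0 (dq f) * holder_norm \<alpha> p0 g + holder_norm \<alpha> p0 f * holder_norm \<alpha> p0 (dq g)"
    by (intro add_mono holder_norm_mult_le hf hg p)
  finally show "holder_norm \<alpha> p0 (dq (\<lambda>z. f z * g z))
           \<le> holder_norm \<alpha> p0 (dq f) * holder_norm \<alpha> p0 g + holder_norm \<alpha> p0 f * holder_norm \<alpha> p0 (dq g)" .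
  have "holder_norm \<alpha> p0 (dqn 2 (\<lambda>z. f z * g z)) = holder_norm \<alpha> p0
     (\<lambda>z. (dq (dq f) z * g z + dq f z * dq g z) + (dq f z * dq g z + f z * dq (dq g) z))"
    unfolding dqn_2 using d2 by (rule holder_norm_cong)
  also have "\<dots> \<le> (holder_norm \<alpha> p0 (\<lambda>z. dq (dq f) z * g z) + holder_norm \<alpha> p0 (\<lambda>z. dq f z * dq g z))
     + (holder_norm \<alpha> p0 (\<lambda>z. dq f z * dq g z) + holder_norm \<alpha> p0 (\<lambda>z. f z * dq (dq g) z))"
    by (intro order.trans[OF holder_norm_add_le(2)] add_mono holder_norm_add_le
        holder_norm_mult_le hf hg p)
  also have "\<dots> \<le> holder_norm \<alpha> p0 (dqn 2 f) * holder_norm \<alpha> p0 g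
        + 2 * (holder_norm \<alpha> p0 (dq f) * holder_norm \<alpha> p0 (dq g))
        + holder_norm \<alpha> p0 f * holder_norm \<alpha> p0 (dqn 2 g)"
    unfolding dqn_2 using holder_norm_mult_le(2)[OF hf(3) hg(1) p]
      holder_norm_mult_le(2)[OF hf(2) hg(2) p] holder_norm_mult_le(2)[OF hf(1) hg(3) p] by linarith
  finally show "holder_norm \<alpha> p0 (dqn 2 (\<lambda>z. f z * g z))
           \<le> holder_norm \<alpha> p0 (dqn 2 f) * holder_norm \<alpha> p0 g
             + 2 * (holder_norm \<alpha> p0 (dq f) * holder_norm \<alpha> p0 (dq g))
             + holder_norm \<alpha> p0 f * holder_norm \<alpha> p0 (dqn 2 g)" .
qed

lemma holder_norm_dqn2_mult_square_le:
  assumes p: "p0 < 0" and f: "q_holder \<alpha> p0 2 f" and g: "q_holder \<alpha> p0 2 g"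
  shows "holder_norm \<alpha> p0 (dqn 2 (\<lambda>z. f z * g z * g z))
    \<le> holder_norm \<alpha> p0 (dqn 2 f) * (holder_norm \<alpha> p0 g)\<^sup>2
      + 4 * holder_norm \<alpha> p0 (dq f) * holder_norm \<alpha> p0 g * holder_norm \<alpha> p0 (dq g)
      + holder_norm \<alpha> p0 f * (2 * holder_norm \<alpha> p0 g * holder_norm \<alpha> p0 (dqn 2 g)
                                + 2 * (holder_norm \<alpha> p0 (dq g))\<^sup>2)"
proof -
  define w where "w = (\<lambda>z. g z * g z)"
  have w: "q_holder \<alpha> p0 2 w" unfolding w_def using q_holder_mult[OF p g g] .
  have nonneg: "0 \<le> holder_norm \<alpha> p0 (dqn n h)" if "q_holder \<alpha> p0 2 h" "n \<le> 2" for h n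
    using holder_norm_nonneg[OF q_holder_in_Holder[OF that] p] .
  note nf = nonneg[OF f, of 0] nonneg[OF f, of 1] nonneg[OF f, of 2]
  note nw = nonneg[OF w, of 0] nonneg[OF w, of 1] nonneg[OF w, of 2]
  have w0: "holder_norm \<alpha> p0 w \<le> (holder_norm \<alpha> p0 g)\<^sup>2"
    unfolding w_def power2_eq_square
    using holder_norm_mult_le(2)[OF q_holder_in_Holder[OF g, of 0] q_holder_in_Holder[OF g, of 0] p]
    by simp
  note w12 = holder_norm_dq_mult_le[OF p g g, folded w_def]
  have "holder_norm \<alpha> p0 (dqn 2 (\<lambda>z. f z * g z * g z)) = holder_norm \<alpha> p0 (dqn 2 (\<lambda>z. f z * w z))"
    by (simp add: w_def mult.assoc)
  also have "\<dots> \<le> holder_norm \<alpha> p0 (dqn 2 f) * holder_norm \<alpha> p0 w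
      + 2 * (holder_norm \<alpha> p0 (dq f) * holder_norm \<alpha> p0 (dq w))
      + holder_norm \<alpha> p0 f * holder_norm \<alpha> p0 (dqn 2 w)"
    using holder_norm_dq_mult_le(2)[OF p f w] .
  also have "\<dots> \<le> holder_norm \<alpha> p0 (dqn 2 f) * (holder_norm \<alpha> p0 g)\<^sup>2
      + 2 * (holder_norm \<alpha> p0 (dq f) * (2 * (holder_norm \<alpha> p0 g * holder_norm \<alpha> p0 (dq g))))
      + holder_norm \<alpha> p0 f * (2 * holder_norm \<alpha> p0 g * holder_norm \<alpha> p0 (dqn 2 g)
                                + 2 * (holder_norm \<alpha> p0 (dq g))\<^sup>2)"
    using w0 w12 nf by (intro add_mono mult_left_mono) (auto simp: power2_eq_square algebra_simps)
  finally show ?thesis by (simp add: algebra_simps)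
qed

lemma dq_reciprocal:
  assumes u: "q_holder \<alpha> p0 (Suc k) u" and nz: "\<And>z. z \<in> OmegaBar p0 \<Longrightarrow> u z \<noteq> 0"
    and z: "z \<in> OmegaBar p0"
  shows "dq (\<lambda>z. 1 / u z) z = - dq u z * (1 / u z) * (1 / u z)"
proof -
  have "(\<lambda>t. u (t, snd z)) differentiable (at (fst z))"
    using q_holder_differentiable[OF u, of 0 z] z by simp
  then show ?thesis using dq_inverse(1) nz z by blast
qed

lemma holder_norm_dqn_Suc_reciprocal:
  assumes u: "q_holder \<alpha> p0 (Suc k) u" and nz: "\<And>z. z \<in> OmegaBar p0 \<Longrightarrow> u z \<noteq> 0"
  shows "holder_norm \<alpha> p0 (dqn (Suc m) (\<lambda>z. 1 / u z))
           = holder_norm \<alpha> p0 (dqn m (\<lambda>z. - dq u z * (1 / u z) * (1 / u z)))"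
  unfolding dqn_Suc_dq
  by (rule holder_norm_cong, rule dqn_cong[of p0]) (auto simp: dq_reciprocal[OF u nz])

lemma holder_norm_dqn_uminus_dq:
  assumes u: "q_holder \<alpha> p0 (Suc k) u" and "m \<le> k"
  shows "holder_norm \<alpha> p0 (dqn m (\<lambda>z. - dq u z)) = holder_norm \<alpha> p0 (dqn (Suc m) u)"
proof -
  have "q_holder \<alpha> p0 k (dq u)" using u by (simp add: q_holder_Suc)
  then have "holder_norm \<alpha> p0 (dqn m (\<lambda>z. - dq u z)) = holder_norm \<alpha> p0 (\<lambda>z. - dqn m (dq u) z)"
    using dqn_uminus \<open>m \<le> k\<close> by (intro holder_norm_cong) blast
  then show ?thesis by (simp add: holder_norm_uminus dqn_Suc_dq)
qed

lemma holder_norm_dqn3_reciprocal_le: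
  fixes u :: "real \<times> real \<Rightarrow> real"
  defines "v \<equiv> \<lambda>z. 1 / u z"
  assumes p: "p0 < 0" and u: "q_holder \<alpha> p0 3 u"
    and c: "0 < c" and lb: "\<And>z. z \<in> OmegaBar p0 \<Longrightarrow> c \<le> u z"
  shows "holder_norm \<alpha> p0 (dqn 3 v)
    \<le> holder_norm \<alpha> p0 (dqn 3 u) * (holder_norm \<alpha> p0 v)\<^sup>2
      + 4 * holder_norm \<alpha> p0 (dqn 2 u) * holder_norm \<alpha> p0 v * holder_norm \<alpha> p0 (dq v)
      + holder_norm \<alpha> p0 (dq u) * (2 * holder_norm \<alpha> p0 v * holder_norm \<alpha> p0 (dqn 2 v)
                                    + 2 * (holder_norm \<alpha> p0 (dq v))\<^sup>2)"
proof -
  have u3: "q_holder \<alpha> p0 (Suc 2) u" using u by (simp add: numeral_3_eq_3)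
  have nz: "u z \<noteq> 0" if "z \<in> OmegaBar p0" for z using lb[OF that] c by auto
  have a: "q_holder \<alpha> p0 2 (\<lambda>z. - dq u z)"
    using u3 unfolding q_holder_Suc by (blast intro: q_holder_uminus)
  have "q_holder \<alpha> p0 2 v"
    unfolding v_def using q_holder_inverse[OF p c lb q_holder_mono[OF u]] by simp
  note bound = holder_norm_dqn2_mult_square_le[OF p a this]
  have norm_a: "holder_norm \<alpha> p0 (dqn m (\<lambda>z. - dq u z)) = holder_norm \<alpha> p0 (dqn (Suc m) u)"
    if "m \<le> 2" for m
    using holder_norm_dqn_uminus_dq[OF u3 that] .
  show ?thesis
    using bound norm_a[of 0] norm_a[of 1] norm_a[of 2]
      holder_norm_dqn_Suc_reciprocal[OF u3 nz, of 2]
    by (simp add: v_def numeral_3_eq_3 numeral_2_eq_2 dqn_Suc)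
qed

section \<open>Arithmetic of the bounds\<close>

lemma sqrt_bounds_of_le:
  fixes b x C L :: real
  assumes "1 < C" "0 \<le> x" and L: "b\<^sup>2 + C\<^sup>2 * (1 + x) ^ 12 \<le> L"
  shows "1 \<le> L" "b \<le> sqrt L" "C * (1 + x) ^ 6 \<le> sqrt L"
proof -
  have "1 \<le> C\<^sup>2" "1 \<le> (1 + x) ^ 12"
    using assms(1,2) by (simp_all add: one_le_power)
  then have "1 \<le> C\<^sup>2 * (1 + x) ^ 12"
    using mult_mono by fastforce
  moreover have b2: "0 \<le> b\<^sup>2" by simp
  ultimately show "1 \<le> L" "b \<le> sqrt L" using L by (linarith, intro real_le_rsqrt, linarith)
  have "(C * (1 + x) ^ 6)\<^sup>2 = C\<^sup>2 * (1 + x) ^ 12"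
    by (simp add: power_mult_distrib flip: power_mult)
  then show "C * (1 + x) ^ 6 \<le> sqrt L"
    using L b2 by (intro real_le_rsqrt) linarith
qed

lemma sqrt_le_self: "1 \<le> x \<Longrightarrow> sqrt x \<le> x"
  by (rule real_le_lsqrt) (auto simp: power2_eq_square)

lemma one_plus_pow6_ge: "0 \<le> (x::real) \<Longrightarrow> 5/4 * x\<^sup>2 + 3/2 * x ^ 3 \<le> (1 + x) ^ 6"
proof -
  assume x: "0 \<le> x"
  have "(1 + x) ^ 6 = 1 + 6*x + 15*x\<^sup>2 + 20*x^3 + 15*x^4 + 6*x^5 + x^6"
    by (simp add: power_def algebra_simps eval_nat_numeral)
  moreover have "0 \<le> x\<^sup>2" "0 \<le> x^3" "0 \<le> x^4" "0 \<le> x^5" "0 \<le> x^6" using x by auto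
  ultimately show ?thesis using x by linarith
qed

text \<open>Each of \<open>b\<^sub>0, b\<^sub>1\<close> is at most \<open>x/2\<close> and each of \<open>a\<^sub>0, a\<^sub>1\<close> at most \<open>x\<close>, so the
  left-hand side is at most \<open>L (5/4 x\<^sup>2 + 3/2 x\<^sup>3) \<le> L (1 + x)\<^sup>6\<close>.\<close>

lemma third_order_bound_arith:
  fixes L a0 a1 a2 b0 b1 b2 :: real
  defines "x \<equiv> 2 * b0 + a0 + (2 * b1 + a1)"
  assumes nonneg: "0 \<le> a0" "0 \<le> a1" "0 \<le> b0" "0 \<le> b1" "0 \<le> b2"
    and L: "1 \<le> L" "a2 \<le> L" "b2 \<le> sqrt L" "(1 + x) ^ 6 \<le> sqrt L"
  shows "a2 * b0\<^sup>2 + 4 * a1 * b0 * b1 + a0 * (2 * b0 * b2 + 2 * b1\<^sup>2) \<le> L * sqrt L"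
proof -
  have x0: "0 \<le> x" using nonneg by (simp add: x_def)
  have b2: "b2 \<le> L" using L(3) sqrt_le_self[OF L(1)] by linarith
  have le_x: "b0 \<le> x/2" "b1 \<le> x/2" "a0 \<le> x" "a1 \<le> x" using nonneg by (auto simp: x_def)
  have "a2 * b0\<^sup>2 \<le> L * (x\<^sup>2/4)"
  proof -
    have "b0\<^sup>2 \<le> (x/2)\<^sup>2" using le_x nonneg by (intro power_mono) auto
    then show ?thesis using L(1,2) by (intro mult_mono) (auto simp: power_divide)
  qed
  moreover have "4 * a1 * b0 * b1 \<le> L * x ^ 3"
  proof -
    have "a1 * (b0 * b1) \<le> x * ((x/2) * (x/2))"
      using le_x nonneg by (intro mult_mono) auto
    then have "4 * a1 * b0 * b1 \<le> x ^ 3" by (simp add: power3_eq_cube algebra_simps)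
    also have "\<dots> \<le> L * x ^ 3" using L(1) x0 by (simp add: mult_le_cancel_right1)
    finally show ?thesis .
  qed
  moreover have "a0 * (2 * b0 * b2) \<le> L * x\<^sup>2"
  proof -
    have "a0 * (b0 * b2) \<le> x * ((x/2) * L)"
      using le_x nonneg b2 x0 by (intro mult_mono) auto
    then show ?thesis by (simp add: power2_eq_square algebra_simps)
  qed
  moreover have "a0 * (2 * b1\<^sup>2) \<le> L * (x ^ 3/2)"
  proof -
    have "a0 * b1\<^sup>2 \<le> x * (x/2)\<^sup>2"
      using le_x nonneg x0 by (intro mult_mono power_mono) auto
    then have "a0 * (2 * b1\<^sup>2) \<le> x ^ 3/2" by (simp add: power2_eq_square power3_eq_cube algebra_simps)
    also have "\<dots> \<le> L * (x ^ 3/2)" using L(1) x0 by (simp add: mult_le_cancel_right1)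
    finally show ?thesis .
  qed
  ultimately have "a2 * b0\<^sup>2 + 4 * a1 * b0 * b1 + a0 * (2 * b0 * b2 + 2 * b1\<^sup>2)
      \<le> L * (5/4 * x\<^sup>2 + 3/2 * x ^ 3)" by (simp add: algebra_simps)
  also have "\<dots> \<le> L * (1 + x) ^ 6" using one_plus_pow6_ge[OF x0] L(1) by (intro mult_left_mono) auto
  also have "\<dots> \<le> L * sqrt L" using L(1,4) by (intro mult_left_mono) auto
  finally show ?thesis .
qed

lemma powr_minus_three_halves:
  fixes L :: real
  assumes "0 < L" "2 \<le> n"
  shows "L powr (real n - 3/2) = L ^ (n - 2) * sqrt L"
proof -
  have "real n - 3/2 = real (n - 2) + 1/2" using assms(2) by (simp add: of_nat_diff)
  then have "L powr (real n - 3/2) = L powr real (n - 2) * L powr (1/2)"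
    by (simp only: powr_add)
  also have "\<dots> = L ^ (n - 2) * sqrt L"
    using assms(1) by (simp only: powr_realpow powr_half_sqrt)
  finally show ?thesis .
qed

text \<open>\<open>B n\<close> plays the role of the norm of \<open>\<partial>\<^sub>q\<^sup>n(1/u)\<close>; the step hypothesis is what the
  triple-product estimate delivers.\<close>

lemma factorial_growth_induction:
  fixes B :: "nat \<Rightarrow> real" and L :: real
  assumes L: "1 \<le> L" and B2: "B 2 \<le> sqrt L" and B3: "B 3 \<le> L * sqrt L"
    and step: "\<And>n. 4 \<le> n \<Longrightarrow> n \<le> N \<Longrightarrow>
                 (\<And>m. 2 \<le> m \<Longrightarrow> m < n \<Longrightarrow> B m \<le> L ^ (m - 1) * fact (m - 2)) \<Longrightarrow>
                 B n \<le> sqrt L * L ^ (n - 2) * fact (n - 3)"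
  shows "2 \<le> n \<Longrightarrow> n \<le> N \<Longrightarrow> B n \<le> L powr (real n - 3/2) * fact (n - 2)"
proof (induction n rule: less_induct)
  case (less n)
  have L0: "0 < L" using L by simp
  note powr_eq = powr_minus_three_halves[OF L0]
  consider "n = 2" | "n = 3" | "4 \<le> n" using less.prems by linarith
  then show ?case
  proof cases
    case 1
    then show ?thesis unfolding powr_eq[OF less.prems(1)] using B2 by simp
  next
    case 2
    then show ?thesis unfolding powr_eq[OF less.prems(1)] using B3 by (simp add: mult.commute)
  next
    case 3
    have "B m \<le> L ^ (m - 1) * fact (m - 2)" if "2 \<le> m" "m < n" for m
    proof -
      have "B m \<le> L ^ (m - 2) * sqrt L * fact (m - 2)"
        using less.IH[OF that(2,1)] that less.prems unfolding powr_eq[OF that(1)] by simp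
      also have "\<dots> \<le> L ^ (m - 2) * L * fact (m - 2)"
        using L sqrt_le_self[OF L] by (intro mult_right_mono mult_left_mono) auto
      also have "\<dots> = L ^ Suc (m - 2) * fact (m - 2)"
        by (simp only: power_Suc2)
      also have "Suc (m - 2) = m - 1"
        using that(1) by simp
      finally show ?thesis .
    qed
    then have "B n \<le> sqrt L * L ^ (n - 2) * fact (n - 3)" using step 3 less.prems by blast
    also have "\<dots> \<le> sqrt L * L ^ (n - 2) * fact (n - 2)"
      using L0 by (intro mult_left_mono fact_mono) auto
    finally show ?thesis unfolding powr_eq[OF less.prems(1)] by (simp add: mult_ac)
  qed
qed

section \<open>Bounds on the derivatives of the reciprocal\<close>

lemma holder_norm_dqn3_reciprocal_le_sqrt:
  fixes u :: "real \<times> real \<Rightarrow> real"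
  defines "v \<equiv> \<lambda>z. 1 / u z"
  assumes p: "p0 < 0" and u: "q_holder \<alpha> p0 3 u"
    and c: "0 < c" and lb: "\<And>z. z \<in> OmegaBar p0 \<Longrightarrow> c \<le> u z"
    and L: "1 \<le> L" "holder_norm \<alpha> p0 (dqn 3 u) \<le> L" "holder_norm \<alpha> p0 (dqn 2 v) \<le> sqrt L"
      "(1 + (2 * holder_norm \<alpha> p0 v + holder_norm \<alpha> p0 (dq u)
             + (2 * holder_norm \<alpha> p0 (dq v) + holder_norm \<alpha> p0 (dqn 2 u)))) ^ 6 \<le> sqrt L"
  shows "holder_norm \<alpha> p0 (dqn 3 v) \<le> L * sqrt L"
proof -
  have nonneg: "0 \<le> holder_norm \<alpha> p0 (dqn m f)" if "q_holder \<alpha> p0 3 f" "m \<le> 3" for f m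
    using holder_norm_nonneg[OF q_holder_in_Holder[OF that] p] .
  have v: "q_holder \<alpha> p0 3 v" unfolding v_def using q_holder_inverse[OF p c lb u] .
  show ?thesis
    using holder_norm_dqn3_reciprocal_le[OF p u c lb, folded v_def]
      third_order_bound_arith[OF nonneg[OF u, of 1, simplified] nonneg[OF u, of 2, simplified]
        nonneg[OF v, of 0, simplified] nonneg[OF v, of 1, simplified] nonneg[OF v, of 2, simplified] L]
    by linarith
qed

definition triple_product_bound :: "real \<Rightarrow> real \<Rightarrow> real \<Rightarrow> bool" where
  "triple_product_bound \<alpha> p0 C1 \<longleftrightarrow> (\<forall>M (L::real) u1 u2 u3. M \<ge> 3 \<longrightarrow> L \<ge> 1 \<longrightarrow>
     Cq M \<alpha> p0 u1 \<longrightarrow> Cq M \<alpha> p0 u2 \<longrightarrow> Cq M \<alpha> p0 u3 \<longrightarrow>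
     (\<forall>n. 2 \<le> n \<and> n \<le> M \<longrightarrow>
        holder_norm \<alpha> p0 (dqn n u1) \<le> L ^ (n - 1) * fact (n - 2) \<and>
        holder_norm \<alpha> p0 (dqn n u2) \<le> L ^ (n - 1) * fact (n - 2) \<and>
        holder_norm \<alpha> p0 (dqn n u3) \<le> L ^ (n - 1) * fact (n - 2)) \<longrightarrow>
     (\<forall>n. 2 \<le> n \<and> n \<le> M \<longrightarrow>
        holder_norm \<alpha> p0 (dqn n (\<lambda>z. u1 z * u2 z * u3 z))
          \<le> C1 * (1 + (\<Sum>l\<le>1. holder_norm \<alpha> p0 (dqn l u1) + holder_norm \<alpha> p0 (dqn l u2)
                               + holder_norm \<alpha> p0 (dqn l u3))) ^ 6 * L ^ (n - 1) * fact (n - 2)))"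

lemma triple_product_boundD:
  assumes "triple_product_bound \<alpha> p0 C1" "3 \<le> M" "1 \<le> L"
    "Cq M \<alpha> p0 u1" "Cq M \<alpha> p0 u2" "Cq M \<alpha> p0 u3"
    "\<forall>n. 2 \<le> n \<and> n \<le> M \<longrightarrow>
        holder_norm \<alpha> p0 (dqn n u1) \<le> L ^ (n - 1) * fact (n - 2) \<and>
        holder_norm \<alpha> p0 (dqn n u2) \<le> L ^ (n - 1) * fact (n - 2) \<and>
        holder_norm \<alpha> p0 (dqn n u3) \<le> L ^ (n - 1) * fact (n - 2)"
    "2 \<le> n" "n \<le> M"
  shows "holder_norm \<alpha> p0 (dqn n (\<lambda>z. u1 z * u2 z * u3 z))
          \<le> C1 * (1 + (\<Sum>l\<le>1. holder_norm \<alpha> p0 (dqn l u1) + holder_norm \<alpha> p0 (dqn l u2)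
                               + holder_norm \<alpha> p0 (dqn l u3))) ^ 6 * L ^ (n - 1) * fact (n - 2)"
  using assms unfolding triple_product_bound_def by blast

lemma holder_norm_dqn_reciprocal_step:
  fixes u :: "real \<times> real \<Rightarrow> real"
  defines "v \<equiv> \<lambda>z. 1 / u z"
  assumes T: "triple_product_bound \<alpha> p0 C1" and p: "p0 < 0" and u: "Cq N \<alpha> p0 u"
    and c: "0 < c" and lb: "\<And>z. z \<in> OmegaBar p0 \<Longrightarrow> c \<le> u z"
    and L: "1 \<le> L" "C1 * (1 + (2 * holder_norm \<alpha> p0 v + holder_norm \<alpha> p0 (dq u)
                               + (2 * holder_norm \<alpha> p0 (dq v) + holder_norm \<alpha> p0 (dqn 2 u)))) ^ 6 \<le> sqrt L"
    and u_bound: "\<And>n. 3 \<le> n \<Longrightarrow> n \<le> N \<Longrightarrow> holder_norm \<alpha> p0 (dqn n u) \<le> L ^ (n - 2) * fact (n - 3)"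
    and n: "4 \<le> n" "n \<le> N"
    and IH: "\<And>m. 2 \<le> m \<Longrightarrow> m < n \<Longrightarrow> holder_norm \<alpha> p0 (dqn m v) \<le> L ^ (m - 1) * fact (m - 2)"
  shows "holder_norm \<alpha> p0 (dqn n v) \<le> sqrt L * L ^ (n - 2) * fact (n - 3)"
proof -
  define a where "a = (\<lambda>z. - dq u z)"
  define M where "M = n - 1"
  have M: "3 \<le> M" "Suc M \<le> N" "n = Suc M" using n by (auto simp: M_def)
  have u': "q_holder \<alpha> p0 (Suc M) u" "periodic_q u"
    using u q_holder_mono M(2) by (auto simp: Cq_iff_q_holder)
  have nz: "u z \<noteq> 0" if "z \<in> OmegaBar p0" for z using lb[OF that] c by auto
  have Cq_a: "Cq M \<alpha> p0 a"
    using u' unfolding a_def Cq_iff_q_holder q_holder_Suc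
    by (auto intro: q_holder_uminus periodic_q_uminus periodic_q_dq)
  have Cq_v: "Cq M \<alpha> p0 v"
    using q_holder_inverse[OF p c lb q_holder_mono[OF u'(1)]] periodic_q_inverse[OF u'(2)]
    by (simp add: v_def Cq_iff_q_holder)
  have norm_a: "holder_norm \<alpha> p0 (dqn m a) = holder_norm \<alpha> p0 (dqn (Suc m) u)" if "m \<le> M" for m
    unfolding a_def using holder_norm_dqn_uminus_dq[OF u'(1) that] .
  have bounds: "\<forall>m. 2 \<le> m \<and> m \<le> M \<longrightarrow>
      holder_norm \<alpha> p0 (dqn m a) \<le> L ^ (m - 1) * fact (m - 2) \<and>
      holder_norm \<alpha> p0 (dqn m v) \<le> L ^ (m - 1) * fact (m - 2) \<and>
      holder_norm \<alpha> p0 (dqn m v) \<le> L ^ (m - 1) * fact (m - 2)"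
    using norm_a u_bound[of "Suc _"] IH M by (auto simp: numeral_eq_Suc)
  have "holder_norm \<alpha> p0 (dqn n v) = holder_norm \<alpha> p0 (dqn M (\<lambda>z. a z * v z * v z))"
    unfolding M(3) v_def a_def using holder_norm_dqn_Suc_reciprocal[OF u'(1) nz] .
  also have "\<dots> \<le> C1 * (1 + (\<Sum>l\<le>1. holder_norm \<alpha> p0 (dqn l a) + holder_norm \<alpha> p0 (dqn l v)
                               + holder_norm \<alpha> p0 (dqn l v))) ^ 6 * L ^ (M - 1) * fact (M - 2)"
    using triple_product_boundD[OF T M(1) L(1) Cq_a Cq_v Cq_v bounds, of M] M(1) by simp
  also have "\<dots> \<le> sqrt L * L ^ (n - 2) * fact (n - 3)"
  proof -
    have "(\<Sum>l\<le>1. holder_norm \<alpha> p0 (dqn l a) + holder_norm \<alpha> p0 (dqn l v) + holder_norm \<alpha> p0 (dqn l v))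
        = 2 * holder_norm \<alpha> p0 v + holder_norm \<alpha> p0 (dq u)
          + (2 * holder_norm \<alpha> p0 (dq v) + holder_norm \<alpha> p0 (dqn 2 u))"
      using norm_a[of 0] norm_a[of 1] M by (simp add: numeral_2_eq_2)
    moreover have "n - 2 = M - 1" "n - 3 = M - 2" using M by auto
    ultimately show ?thesis using L by (simp only:) (intro mult_right_mono, auto)
  qed
  finally show ?thesis .
qed

theorem lemma2p3:
  fixes p0 \<alpha> C1 :: real and N :: nat and u :: "real \<times> real \<Rightarrow> real"
  assumes "p0 < 0" and "0 < \<alpha>" and "\<alpha> < 1"
    and "C1 > 1"
    and C1_prop: "\<And>M (L::real) (u1 :: real \<times> real \<Rightarrow> real) u2 u3.
       M \<ge> 3 \<Longrightarrow> L \<ge> 1 \<Longrightarrow>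
       Cq M \<alpha> p0 u1 \<Longrightarrow> Cq M \<alpha> p0 u2 \<Longrightarrow> Cq M \<alpha> p0 u3 \<Longrightarrow>
       (\<forall>n. 2 \<le> n \<and> n \<le> M \<longrightarrow>
          holder_norm \<alpha> p0 (dqn n u1) \<le> L ^ (n - 1) * fact (n - 2) \<and>
          holder_norm \<alpha> p0 (dqn n u2) \<le> L ^ (n - 1) * fact (n - 2) \<and>
          holder_norm \<alpha> p0 (dqn n u3) \<le> L ^ (n - 1) * fact (n - 2)) \<Longrightarrow>
       (\<forall>n. 2 \<le> n \<and> n \<le> M \<longrightarrow>
          holder_norm \<alpha> p0 (dqn n (\<lambda>z. u1 z * u2 z * u3 z))
            \<le> C1 * (1 + (\<Sum>l\<le>1. holder_norm \<alpha> p0 (dqn l u1) + holder_norm \<alpha> p0 (dqn l u2)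
                                 + holder_norm \<alpha> p0 (dqn l u3))) ^ 6 * L ^ (n - 1) * fact (n - 2))"
    and "N \<ge> 3"
    and "Cq N \<alpha> p0 u"
    and "Inf (u ` Omega p0) > 0"
    and L_ge: "L \<ge> (holder_norm \<alpha> p0 (dqn 2 (\<lambda>z. 1 / u z)))\<^sup>2
                + C1\<^sup>2 * (1 + (\<Sum>l\<le>1. 2 * holder_norm \<alpha> p0 (dqn l (\<lambda>z. 1 / u z))
                                       + holder_norm \<alpha> p0 (dqn (1 + l) u))) ^ 12"
    and "\<And>n. 3 \<le> n \<Longrightarrow> n \<le> N \<Longrightarrow> holder_norm \<alpha> p0 (dqn n u) \<le> L ^ (n - 2) * fact (n - 3)"
  shows "\<forall>n. 2 \<le> n \<and> n \<le> N \<longrightarrow>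
           holder_norm \<alpha> p0 (dqn n (\<lambda>z. 1 / u z)) \<le> L powr (real n - 3 / 2) * fact (n - 2)"
proof -
  note p = \<open>p0 < 0\<close>
  define v where "v = (\<lambda>z. 1 / u z)"
  define c where "c = Inf (u ` Omega p0)"
  have T: "triple_product_bound \<alpha> p0 C1"
    unfolding triple_product_bound_def using C1_prop by blast
  have u: "q_holder \<alpha> p0 N u" using \<open>Cq N \<alpha> p0 u\<close> by (simp add: Cq_iff_q_holder)
  have c: "0 < c" using \<open>Inf (u ` Omega p0) > 0\<close> by (simp add: c_def)
  have lb: "c \<le> u z" if "z \<in> OmegaBar p0" for z
    using Inf_Omega_le[OF q_holder_in_Holder[OF u, of 0] p \<open>0 < \<alpha>\<close> that] by (simp add: c_def)
  have v: "q_holder \<alpha> p0 N v" unfolding v_def using q_holder_inverse[OF p c lb u] .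
  define x where "x = 2 * holder_norm \<alpha> p0 v + holder_norm \<alpha> p0 (dq u)
                      + (2 * holder_norm \<alpha> p0 (dq v) + holder_norm \<alpha> p0 (dqn 2 u))"
  have "0 \<le> x"
    unfolding x_def using \<open>N \<ge> 3\<close>
      holder_norm_nonneg[OF q_holder_in_Holder[OF u] p, of 1] holder_norm_nonneg[OF q_holder_in_Holder[OF u] p, of 2]
      holder_norm_nonneg[OF q_holder_in_Holder[OF v] p, of 0] holder_norm_nonneg[OF q_holder_in_Holder[OF v] p, of 1]
    by simp
  moreover have "(holder_norm \<alpha> p0 (dqn 2 v))\<^sup>2 + C1\<^sup>2 * (1 + x) ^ 12 \<le> L"
    using L_ge by (simp add: v_def x_def numeral_2_eq_2)
  ultimately have x: "0 \<le> x" and L: "1 \<le> L" "holder_norm \<alpha> p0 (dqn 2 v) \<le> sqrt L" "C1 * (1 + x) ^ 6 \<le> sqrt L"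
    using sqrt_bounds_of_le[OF \<open>C1 > 1\<close>] by auto
  then have "(1 + x) ^ 6 \<le> sqrt L"
    using \<open>C1 > 1\<close> by (smt (verit) mult_le_cancel_right1 zero_le_power)
  have "holder_norm \<alpha> p0 (dqn 3 v) \<le> L * sqrt L"
    using holder_norm_dqn3_reciprocal_le_sqrt[OF p q_holder_mono[OF u \<open>N \<ge> 3\<close>] c lb L(1) _
        L(2)[unfolded v_def]] assms(10)[of 3] \<open>(1 + x) ^ 6 \<le> sqrt L\<close> \<open>N \<ge> 3\<close>
    unfolding v_def x_def by simp
  moreover have "holder_norm \<alpha> p0 (dqn n v) \<le> sqrt L * L ^ (n - 2) * fact (n - 3)"
    if "4 \<le> n" "n \<le> N"
      and "\<And>m. 2 \<le> m \<Longrightarrow> m < n \<Longrightarrow> holder_norm \<alpha> p0 (dqn m v) \<le> L ^ (m - 1) * fact (m - 2)"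
    for n
    using holder_norm_dqn_reciprocal_step[OF T p \<open>Cq N \<alpha> p0 u\<close> c lb L(1) L(3)[unfolded x_def v_def]
        assms(10)] that
    unfolding v_def by blast
  ultimately have "holder_norm \<alpha> p0 (dqn n v) \<le> L powr (real n - 3/2) * fact (n - 2)"
    if "2 \<le> n" "n \<le> N" for n
    using factorial_growth_induction[where B = "\<lambda>n. holder_norm \<alpha> p0 (dqn n v)", OF L(1,2)] that
    by blast
  then show ?thesis by (simp add: v_def)
qed

end
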